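(* Let $d,n\ge 2$, let $f$ be a stable update function, let $\mathcal D$ be an interaction distribution on $\Omega$ with full support, and let $\mathcal U^{(0)}$ be a strictly convex configuration of $n$ opinions in $\mathbb S^{d-1}$. Then, almost surely, $\mathcal U^{(t)}$ polarizes as $t\to\infty$.
   Context: Model: opinions are unit vectors in $\mathbb R^d$; a configuration is an $n$-tuple $\mathcal U=(\vec u_1,\dots,\vec u_n)$ and $A_{ij}=\langle\vec u_i,\vec u_j\rangle$. Update function $f:[-1,1]\to\mathbb R$. $\Omega=\{(i,j)\in[n]^2:i\ne j\}$, $\mathcal D$ a probability distribution on $\Omega$ (full support: every element has positive probability), $I^{(1)},I^{(2)},\dots$ i.i.d. with law $\mathcal D$; if the interaction at step $t$ is $(i,j)$ then $\vec u_k^{(t+1)}=\vec u_k^{(t)}$ for $k\ne i$ and $\vec u_i^{(t+1)}=\vec w/\|\vec w\|$ with $\vec w=\vec u_i^{(t)}+f(A^{(t)}_{ij})\vec u_j^{(t)}$. $f$ is stable if continuous and $\operatorname{sign}f(A)=\operatorname{sign}A$ for all $A\in[-1,1]$. Strictly convex: there exist $b_1,\dots,b_n\in\{\pm1\}$ with $\langle b_i\vec u_i,b_j\vec u_j\rangle>0$ for all $i,j$. Polarized: $\vec u_i=\pm\vec u_j$ for all $i,j$; $\mathcal U^{(t)}$ polarizes if $\lim_t\mathcal U^{(t)}$ exists and is polarized. *)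

theory Defs
  imports "HOL-Analysis.Analysis" "HOL-Probability.Probability"
begin

type_synonym ('d) config = "nat \<Rightarrow> real ^ ('d::finite)"

definition stable :: "(real \<Rightarrow> real) \<Rightarrow> bool" where
  "stable f \<longleftrightarrow> continuous_on {-1..1} f \<and> (\<forall>A\<in>{-1..1}. sgn (f A) = sgn A)"

definition Omega :: "nat \<Rightarrow> (nat \<times> nat) set" where
  "Omega n = {(i,j). i < n \<and> j < n \<and> i \<noteq> j}"

definition unit_config :: "nat \<Rightarrow> ('d::finite) config \<Rightarrow> bool" where
  "unit_config n U \<longleftrightarrow> (\<forall>i<n. norm (U i) = 1)"

definition strictly_convex :: "nat \<Rightarrow> ('d::finite) config \<Rightarrow> bool" where
  "strictly_convex n U \<longleftrightarrow>
     (\<exists>b::nat \<Rightarrow> real. (\<forall>i<n. b i \<in> {-1, 1}) \<and>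
        (\<forall>i<n. \<forall>j<n. inner (b i *\<^sub>R U i) (b j *\<^sub>R U j) > 0))"

definition polarized :: "nat \<Rightarrow> ('d::finite) config \<Rightarrow> bool" where
  "polarized n U \<longleftrightarrow> (\<forall>i<n. \<forall>j<n. U i = U j \<or> U i = - U j)"

definition update :: "(real \<Rightarrow> real) \<Rightarrow> ('d::finite) config \<Rightarrow> nat \<times> nat \<Rightarrow> ('d::finite) config" where
  "update f U p = (case p of (i, j) \<Rightarrow>
     (let w = U i + f (inner (U i) (U j)) *\<^sub>R U j in U(i := (1 / norm w) *\<^sub>R w)))"

text \<open>Trajectory driven by the sequence of interactions I^(1), I^(2), ... (stream entries 0,1,...).\<close>
primrec traj :: "(real \<Rightarrow> real) \<Rightarrow> ('d::finite) config \<Rightarrow> (nat \<times> nat) stream \<Rightarrow> nat \<Rightarrow> ('d::finite) config" where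
  "traj f U0 \<omega> 0 = U0"
| "traj f U0 \<omega> (Suc t) = update f (traj f U0 \<omega> t) (\<omega> !! t)"

definition polarizes :: "nat \<Rightarrow> (nat \<Rightarrow> ('d::finite) config) \<Rightarrow> bool" where
  "polarizes n X \<longleftrightarrow>
     (\<exists>L. (\<forall>i<n. (\<lambda>t. X t i) \<longlonglongrightarrow> L i) \<and> polarized n L)"

end

theory Submission
  imports Defs
begin

(* Flip every opinion by the sign b_i given by strict convexity, so that all pairwise inner
   products of the oriented opinions b_i u_i are at least some m0 > 0. By continuity and the
   sign condition, f then pushes u_i towards b_i b_j u_j with a weight c >= delta > 0, and the
   normalized vector u_i + c u_j stays in every cap {v. <v,z> >= mu} (mu >= 0) that contains
   u_i and u_j. Hence alignment at level mu >= m0, and every such cap containing all oriented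
   opinions, is invariant. Letting each agent i >= 1 interact r times in a row with agent 0
   divides 1 - <u_i, u_0> by (1 + delta)^r >= 8, so by the quasi-triangle inequality for
   1 - <x, y> such a block halves the defect 1 - mu. Almost surely this block occurs infinitely
   often, so mu tends to 1; invariance of the caps then makes every oriented opinion a Cauchy
   sequence, and all oriented limits coincide. *)

lemma inner_self_unit: "norm (x::'a::real_inner) = 1 \<Longrightarrow> inner x x = 1"
  by (metis power2_norm_eq_inner power_one)

lemma norm_diff_unit_sq:
  fixes x y :: "'a::real_inner"
  assumes "norm x = 1" "norm y = 1"
  shows "(norm (x - y))\<^sup>2 = 2 - 2 * inner x y"
  using assms by (simp add: power2_norm_eq_inner inner_diff_left inner_diff_right
      inner_commute inner_self_unit)

lemma norm_diff_le_of_inner_ge: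
  fixes x y :: "'a::real_inner"
  assumes "norm x = 1" "norm y = 1" "0 \<le> e" "1 - e\<^sup>2 / 2 \<le> inner x y"
  shows "norm (x - y) \<le> e"
proof -
  have "(norm (x - y))\<^sup>2 \<le> e\<^sup>2" using norm_diff_unit_sq[OF assms(1,2)] assms(4) by simp
  thus ?thesis using assms(3) by (simp add: power2_le_iff_abs_le)
qed

lemma one_minus_inner_triangle:
  fixes x y z :: "'a::real_inner"
  assumes "norm x = 1" "norm y = 1" "norm z = 1"
  shows "1 - inner x z \<le> 2 * (1 - inner x y) + 2 * (1 - inner y z)"
proof -
  have "(norm (x - z))\<^sup>2 \<le> (norm (x - y) + norm (y - z))\<^sup>2"
    using norm_triangle_ineq[of "x - y" "y - z"] by (simp add: power_mono)
  also have "\<dots> \<le> 2 * (norm (x - y))\<^sup>2 + 2 * (norm (y - z))\<^sup>2"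
    using sum_squares_bound[of "norm (x - y)" "norm (y - z)"] by (simp add: power2_eq_square algebra_simps)
  finally show ?thesis
    using norm_diff_unit_sq[OF assms(1,3)] norm_diff_unit_sq[OF assms(1,2)]
      norm_diff_unit_sq[OF assms(2,3)] by simp
qed

lemma norm_add_scaleR_unit_bounds:
  fixes x y :: "'a::real_inner"
  assumes "norm x = 1" "norm y = 1" "0 \<le> inner x y" "0 \<le> c"
  shows "1 \<le> norm (x + c *\<^sub>R y)" and "norm (x + c *\<^sub>R y) \<le> 1 + c"
proof -
  have "(norm (x + c *\<^sub>R y))\<^sup>2 = 1 + 2 * c * inner x y + c\<^sup>2"
    using assms(1,2) unfolding power2_norm_eq_inner
    by (simp add: inner_add_left inner_add_right inner_commute inner_self_unit power2_eq_square)
  hence "1 \<le> (norm (x + c *\<^sub>R y))\<^sup>2" using assms(3,4) by simp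
  thus "1 \<le> norm (x + c *\<^sub>R y)" by (metis abs_norm_cancel one_power2 power2_le_imp_le norm_ge_zero)
  show "norm (x + c *\<^sub>R y) \<le> 1 + c"
    using norm_triangle_ineq[of x "c *\<^sub>R y"] assms by simp
qed

lemma inner_sgn_add_scaleR_ge:
  fixes x y z :: "'a::real_inner"
  assumes "norm x = 1" "norm y = 1" "0 \<le> inner x y" "0 \<le> c"
    and "0 \<le> \<mu>" "\<mu> \<le> inner x z" "\<mu> \<le> inner y z"
  shows "\<mu> \<le> inner (sgn (x + c *\<^sub>R y)) z"
proof -
  define N where "N = norm (x + c *\<^sub>R y)"
  have N: "1 \<le> N" "N \<le> 1 + c" using norm_add_scaleR_unit_bounds[OF assms(1-4)] by (simp_all add: N_def)
  have "N * \<mu> \<le> (1 + c) * \<mu>" using N assms(5) by (simp add: mult_right_mono)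
  also have "\<dots> \<le> inner x z + c * inner y z"
    using assms(4,6,7) mult_left_mono[of \<mu> "inner y z" c] by (simp add: algebra_simps)
  finally have "\<mu> \<le> (inner x z + c * inner y z) / N" using N by (simp add: pos_le_divide_eq mult.commute)
  thus ?thesis by (simp add: sgn_div_norm N_def inner_add_left divide_inverse_commute)
qed

lemma one_minus_inner_sgn_add_scaleR_le:
  fixes x y :: "'a::real_inner"
  assumes "norm x = 1" "norm y = 1" "0 \<le> inner x y" "0 \<le> c"
  shows "1 - inner (sgn (x + c *\<^sub>R y)) y \<le> (1 - inner x y) / (1 + c)"
proof -
  define N where "N = norm (x + c *\<^sub>R y)"
  have N: "1 \<le> N" "N \<le> 1 + c" using norm_add_scaleR_unit_bounds[OF assms] by (simp_all add: N_def)
  have "inner (sgn (x + c *\<^sub>R y)) y = (inner x y + c) / N"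
    using assms(2) by (simp add: sgn_div_norm N_def inner_add_left inner_self_unit divide_inverse_commute)
  moreover have "(inner x y + c) / (1 + c) \<le> (inner x y + c) / N"
    using N assms(3,4) by (intro divide_left_mono) auto
  moreover have "1 - (inner x y + c) / (1 + c) = (1 - inner x y) / (1 + c)"
    using assms(4) by (simp add: field_simps)
  ultimately show ?thesis by linarith
qed

lemma LIMSEQ_common_if_settles:
  fixes Y :: "nat \<Rightarrow> nat \<Rightarrow> 'a::complete_space"
  assumes settle: "\<forall>\<epsilon>>0. \<exists>t. \<forall>s\<ge>t. \<forall>i<n. \<forall>k<n. dist (Y i s) (Y k t) < \<epsilon>"
  shows "\<exists>L. \<forall>i<n. Y i \<longlonglongrightarrow> L"
proof (cases "n = 0")
  case False
  hence n0: "0 < n" by simp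
  have settle_half: "\<exists>t. \<forall>s\<ge>t. \<forall>i<n. \<forall>k<n. dist (Y i s) (Y k t) < \<epsilon> / 2" if "0 < \<epsilon>" for \<epsilon> :: real
    using that by (intro settle[rule_format]) simp
  have "Cauchy (Y 0)"
  proof (rule metric_CauchyI)
    fix \<epsilon> :: real assume "0 < \<epsilon>"
    then obtain t where t: "\<forall>s\<ge>t. dist (Y 0 s) (Y 0 t) < \<epsilon> / 2"
      using settle_half n0 by blast
    have "dist (Y 0 s) (Y 0 s') < \<epsilon>" if "t \<le> s" "t \<le> s'" for s s'
    proof -
      have "dist (Y 0 s) (Y 0 t) < \<epsilon> / 2" "dist (Y 0 s') (Y 0 t) < \<epsilon> / 2" using t that by auto
      thus ?thesis using dist_triangle2[of "Y 0 s" "Y 0 s'" "Y 0 t"] by linarith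
    qed
    thus "\<exists>M. \<forall>m\<ge>M. \<forall>n\<ge>M. dist (Y 0 m) (Y 0 n) < \<epsilon>" by blast
  qed
  then obtain L where L: "Y 0 \<longlonglongrightarrow> L" using Cauchy_convergent_iff convergent_def by blast
  have "Y i \<longlonglongrightarrow> L" if i: "i < n" for i
  proof (rule metric_LIMSEQ_I)
    fix \<epsilon> :: real assume "0 < \<epsilon>"
    then obtain t where t: "\<forall>s\<ge>t. \<forall>i<n. \<forall>k<n. dist (Y i s) (Y k t) < \<epsilon> / 2"
      using settle_half by blast
    have "\<forall>s\<ge>t. dist (Y 0 s) (Y 0 t) \<le> \<epsilon> / 2"
      using t n0 by (meson less_imp_le)
    hence "dist L (Y 0 t) \<le> \<epsilon> / 2"
      by (intro LIMSEQ_le_const2[OF tendsto_dist[OF L tendsto_const]]) blast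
    moreover have "dist (Y i s) (Y 0 t) < \<epsilon> / 2" if "t \<le> s" for s
      using t that i n0 by blast
    ultimately have "dist (Y i s) L < \<epsilon>" if "t \<le> s" for s
      using dist_triangle2[of "Y i s" L "Y 0 t"] that by fastforce
    thus "\<exists>N. \<forall>s\<ge>N. dist (Y i s) L < \<epsilon>" by blast
  qed
  thus ?thesis by blast
qed simp

lemma polarizes_if_oriented_settles:
  fixes X :: "nat \<Rightarrow> ('d::finite) config"
  assumes b: "\<forall>i. b i \<in> {-1, 1::real}"
    and settle: "\<forall>\<epsilon>>0. \<exists>t. \<forall>s\<ge>t. \<forall>i<n. \<forall>k<n. dist (b i *\<^sub>R X s i) (b k *\<^sub>R X t k) < \<epsilon>"
  shows "polarizes n X"
proof -
  obtain L where L: "\<forall>i<n. (\<lambda>s. b i *\<^sub>R X s i) \<longlonglongrightarrow> L"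
    using LIMSEQ_common_if_settles[of n "\<lambda>i s. b i *\<^sub>R X s i", OF settle] by blast
  have "(\<lambda>s. X s i) \<longlonglongrightarrow> b i *\<^sub>R L" if "i < n" for i
  proof -
    have "b i * b i = 1" using b[rule_format, of i] by auto
    hence "(\<lambda>s. X s i) = (\<lambda>s. b i *\<^sub>R (b i *\<^sub>R X s i))" by simp
    thus ?thesis using tendsto_scaleR[OF tendsto_const[of "b i"] L[rule_format, OF that]] by simp
  qed
  moreover have "b i *\<^sub>R L = b k *\<^sub>R L \<or> b i *\<^sub>R L = - (b k *\<^sub>R L)" for i k
  proof -
    consider "b i = b k" | "b i = - b k" using b[rule_format, of i] b[rule_format, of k] by fastforce
    thus ?thesis by cases simp_all
  qed
  ultimately show ?thesis
    unfolding polarizes_def polarized_def by (intro exI[of _ "\<lambda>i. b i *\<^sub>R L"]) simp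
qed

definition aligned :: "nat \<Rightarrow> (nat \<Rightarrow> real) \<Rightarrow> ('d::finite) config \<Rightarrow> real \<Rightarrow> bool" where
  "aligned n b U \<mu> \<longleftrightarrow>
     (\<forall>i<n. norm (U i) = 1) \<and> (\<forall>i<n. \<forall>j<n. \<mu> \<le> inner (b i *\<^sub>R U i) (b j *\<^sub>R U j))"

definition pull_block :: "nat \<Rightarrow> nat \<Rightarrow> (nat \<times> nat) list" where
  "pull_block n r = concat (map (\<lambda>i. replicate r (i, 0)) [1..<n])"

lemma aligned_mono: "aligned n b U \<mu> \<Longrightarrow> \<nu> \<le> \<mu> \<Longrightarrow> aligned n b U \<nu>"
  unfolding aligned_def by (meson order_trans)

lemma update_self: "update f U (i, j) i = sgn (U i + f (inner (U i) (U j)) *\<^sub>R U j)"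
  by (simp add: update_def Let_def sgn_div_norm divide_inverse)

lemma update_other: "k \<noteq> i \<Longrightarrow> update f U (i, j) k = U k"
  by (simp add: update_def Let_def)

lemma foldl_update_other: "l \<notin> fst ` set w \<Longrightarrow> foldl (update f) U w l = U l"
  by (induction w arbitrary: U) (auto simp: update_other)

lemma traj_add: "traj f U0 \<omega> (t + k) = foldl (update f) (traj f U0 \<omega> t) (stake k (sdrop t \<omega>))"
proof (induction k arbitrary: t)
  case (Suc k)
  have "traj f U0 \<omega> (t + Suc k) = traj f U0 \<omega> (Suc t + k)" by simp
  also have "\<dots> = foldl (update f) (traj f U0 \<omega> t) (stake (Suc k) (sdrop t \<omega>))"
    unfolding Suc.IH by (simp add: sdrop_snth)
  finally show ?case .
qed simp

lemma set_stake_sdrop_subset: "set (stake k (sdrop t \<omega>)) \<subseteq> sset \<omega>"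
  by (auto simp: in_set_conv_nth sset_range sdrop_snth)

lemma set_pull_block: "set (pull_block n r) \<subseteq> Omega n"
  by (auto simp: pull_block_def Omega_def)

locale oriented_dynamics =
  fixes f :: "real \<Rightarrow> real" and n :: nat and b :: "nat \<Rightarrow> real" and m0 \<delta> :: real
  assumes b_sign: "b i \<in> {-1, 1}"
    and m0_pos: "0 < m0" and \<delta>_pos: "0 < \<delta>"
    and f_sgn: "A \<in> {-1..1} \<Longrightarrow> sgn (f A) = sgn A"
    and f_bound: "A \<in> {-1..1} \<Longrightarrow> m0 \<le> \<bar>A\<bar> \<Longrightarrow> \<delta> \<le> \<bar>f A\<bar>"
begin

lemma b_sq: "b i * b i = 1"
  using b_sign[of i] by auto

lemma norm_oriented: "norm (b i *\<^sub>R v) = norm v"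
  using b_sign[of i] by auto

lemma aligned_unit: "aligned n b U \<mu> \<Longrightarrow> i < n \<Longrightarrow> norm (b i *\<^sub>R U i) = 1"
  using b_sign[of i] by (auto simp: aligned_def)

lemma aligned_le_1:
  assumes "aligned n b U \<mu>" "i < n"
  shows "\<mu> \<le> 1"
proof -
  have "\<mu> \<le> inner (b i *\<^sub>R U i) (b i *\<^sub>R U i)" using assms unfolding aligned_def by blast
  also have "\<dots> = 1" using inner_self_unit[OF aligned_unit[OF assms]] .
  finally show ?thesis .
qed

lemma aligned_inner_nonneg:
  "aligned n b U \<mu> \<Longrightarrow> m0 \<le> \<mu> \<Longrightarrow> i < n \<Longrightarrow> j < n \<Longrightarrow> 0 \<le> inner (b i *\<^sub>R U i) (b j *\<^sub>R U j)"
  using m0_pos unfolding aligned_def by (meson less_imp_le order_trans)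

(* The weight is c = b_i b_j f(A_ij): its sign is that of b_i b_j A_ij >= m0 > 0. *)
lemma oriented_update:
  assumes al: "aligned n b U \<mu>" and "m0 \<le> \<mu>" "i < n" "j < n"
  obtains c where "\<delta> \<le> c" "b i *\<^sub>R update f U (i, j) i = sgn (b i *\<^sub>R U i + c *\<^sub>R (b j *\<^sub>R U j))"
proof -
  define A c where "A = inner (U i) (U j)" and "c = b i * b j * f A"
  have A1: "A \<in> {-1..1}"
    using Cauchy_Schwarz_ineq2[of "U i" "U j"] al assms(3,4) by (auto simp: aligned_def A_def abs_le_iff)
  have "m0 \<le> inner (b i *\<^sub>R U i) (b j *\<^sub>R U j)"
    using al assms(2-4) unfolding aligned_def by (meson order_trans)
  hence "m0 \<le> b i * b j * A" by (simp add: A_def mult.commute mult.left_commute)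
  moreover from this have "m0 \<le> \<bar>A\<bar>" using b_sign[of i] b_sign[of j] by auto
  ultimately have "\<delta> \<le> c"
    using f_bound[OF A1] f_sgn[OF A1] m0_pos b_sign[of i] b_sign[of j] unfolding c_def
    by (auto simp: sgn_if split: if_splits)
  have "sgn (b i) = b i" using b_sign[of i] by auto
  hence "b i *\<^sub>R update f U (i, j) i = sgn (b i *\<^sub>R (U i + f A *\<^sub>R U j))"
    by (simp only: update_self A_def sgn_scaleR)
  also have "\<dots> = sgn (b i *\<^sub>R U i + c *\<^sub>R (b j *\<^sub>R U j))"
  proof -
    have "b i * b j * f A * b j = b i * f A * (b j * b j)" by (simp only: mult_ac)
    hence "c *\<^sub>R (b j *\<^sub>R U j) = (b i * f A) *\<^sub>R U j"
      by (simp only: c_def scaleR_scaleR b_sq mult_1_right)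
    thus ?thesis by (simp only: scaleR_add_right scaleR_scaleR)
  qed
  finally show ?thesis using \<open>\<delta> \<le> c\<close> by (rule that[rotated])
qed

lemma cap_update:
  assumes al: "aligned n b U \<mu>" and "m0 \<le> \<mu>" and ij: "(i, j) \<in> Omega n"
    and "0 \<le> \<nu>" and cap: "\<forall>k<n. \<nu> \<le> inner (b k *\<^sub>R U k) z"
  shows "\<forall>k<n. \<nu> \<le> inner (b k *\<^sub>R update f U (i, j) k) z"
proof -
  have i: "i < n" and j: "j < n" using ij by (auto simp: Omega_def)
  obtain c where "\<delta> \<le> c" and c: "b i *\<^sub>R update f U (i, j) i = sgn (b i *\<^sub>R U i + c *\<^sub>R (b j *\<^sub>R U j))"
    using oriented_update[OF al \<open>m0 \<le> \<mu>\<close> i j] .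
  hence "\<nu> \<le> inner (b i *\<^sub>R update f U (i, j) i) z"
    using inner_sgn_add_scaleR_ge[OF aligned_unit[OF al i] aligned_unit[OF al j]
        aligned_inner_nonneg[OF al \<open>m0 \<le> \<mu>\<close> i j]] \<delta>_pos \<open>0 \<le> \<nu>\<close> cap i j
    by simp
  thus ?thesis using cap update_other by metis
qed

lemma aligned_update:
  assumes al: "aligned n b U \<mu>" and m: "m0 \<le> \<mu>" and ij: "(i, j) \<in> Omega n"
  shows "aligned n b (update f U (i, j)) \<mu>"
proof -
  define V where "V = update f U (i, j)"
  have i: "i < n" and j: "j < n" using ij by (auto simp: Omega_def)
  have \<mu>: "0 \<le> \<mu>" "\<mu> \<le> 1" using m m0_pos aligned_le_1[OF al i] by auto
  obtain c where "\<delta> \<le> c" and c: "b i *\<^sub>R V i = sgn (b i *\<^sub>R U i + c *\<^sub>R (b j *\<^sub>R U j))"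
    unfolding V_def using oriented_update[OF al m i j] .
  have "norm (b i *\<^sub>R V i) = 1"
    using c norm_add_scaleR_unit_bounds(1)[OF aligned_unit[OF al i] aligned_unit[OF al j]
        aligned_inner_nonneg[OF al m i j], of c] \<delta>_pos \<open>\<delta> \<le> c\<close>
    by (auto simp: norm_sgn)
  hence unit: "norm (V k) = 1" if "k < n" for k
    using al that norm_oriented[of i "V i"] by (cases "k = i") (auto simp: V_def update_other aligned_def)
  have off_i: "\<mu> \<le> inner (b k *\<^sub>R V k) (b l *\<^sub>R V l)" if "k < n" "l < n" "l \<noteq> i" for k l
  proof -
    have "\<forall>k<n. \<mu> \<le> inner (b k *\<^sub>R U k) (b l *\<^sub>R U l)" using al that by (simp add: aligned_def)
    from cap_update[OF al m ij \<mu>(1) this] show ?thesis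
      using that by (simp add: V_def update_other)
  qed
  have "\<mu> \<le> inner (b k *\<^sub>R V k) (b l *\<^sub>R V l)" if "k < n" "l < n" for k l
  proof (cases "l = i")
    case True
    show ?thesis
    proof (cases "k = i")
      case True
      thus ?thesis using \<open>l = i\<close> \<mu>(2) inner_self_unit[OF \<open>norm (b i *\<^sub>R V i) = 1\<close>] by simp
    qed (use off_i[of l k] that True in \<open>simp add: inner_commute\<close>)
  qed (use off_i that in simp)
  thus ?thesis using unit by (simp add: aligned_def V_def)
qed

lemma pull_update:
  assumes al: "aligned n b U \<mu>" and m: "m0 \<le> \<mu>" and ij: "(i, j) \<in> Omega n"
  shows "1 - inner (b i *\<^sub>R update f U (i, j) i) (b j *\<^sub>R update f U (i, j) j)
     \<le> (1 - inner (b i *\<^sub>R U i) (b j *\<^sub>R U j)) / (1 + \<delta>)"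
proof -
  have i: "i < n" and j: "j < n" and "j \<noteq> i" using ij by (auto simp: Omega_def)
  define x y where "x = b i *\<^sub>R U i" and "y = b j *\<^sub>R U j"
  have x: "norm x = 1" and y: "norm y = 1" and xy: "0 \<le> inner x y"
    using aligned_unit[OF al i] aligned_unit[OF al j] aligned_inner_nonneg[OF al m i j]
    by (simp_all add: x_def y_def)
  obtain c where c: "\<delta> \<le> c" "b i *\<^sub>R update f U (i, j) i = sgn (x + c *\<^sub>R y)"
    using oriented_update[OF al m i j] unfolding x_def y_def .
  have "inner x y \<le> 1" using Cauchy_Schwarz_ineq2[of x y] x y by simp
  hence "(1 - inner x y) / (1 + c) \<le> (1 - inner x y) / (1 + \<delta>)"
    using c(1) \<delta>_pos by (intro divide_left_mono) auto
  moreover have "update f U (i, j) j = U j" using update_other[OF \<open>j \<noteq> i\<close>] .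
  ultimately show ?thesis
    using one_minus_inner_sgn_add_scaleR_le[OF x y xy, of c] \<delta>_pos c
    unfolding x_def y_def by simp
qed

lemma aligned_foldl:
  "aligned n b U \<mu> \<Longrightarrow> m0 \<le> \<mu> \<Longrightarrow> set w \<subseteq> Omega n \<Longrightarrow> aligned n b (foldl (update f) U w) \<mu>"
  by (induction w arbitrary: U) (auto intro: aligned_update)

lemma cap_foldl:
  assumes "aligned n b U m0" "set w \<subseteq> Omega n" "0 \<le> \<nu>" "\<forall>k<n. \<nu> \<le> inner (b k *\<^sub>R U k) z"
  shows "\<forall>k<n. \<nu> \<le> inner (b k *\<^sub>R foldl (update f) U w k) z"
  using assms
proof (induction w arbitrary: U)
  case (Cons p w)
  obtain i j where p: "p = (i, j)" by fastforce
  have "(i, j) \<in> Omega n" using Cons.prems(2) p by simp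
  from Cons.IH[OF aligned_update[OF Cons.prems(1) order_refl this] _ Cons.prems(3)
      cap_update[OF Cons.prems(1) order_refl this Cons.prems(3,4)]] Cons.prems(2)
  show ?case by (simp add: p)
qed simp

lemma pull_repeat:
  assumes "aligned n b U \<mu>" "m0 \<le> \<mu>" "(i, j) \<in> Omega n"
  shows "1 - inner (b i *\<^sub>R foldl (update f) U (replicate k (i, j)) i)
      (b j *\<^sub>R foldl (update f) U (replicate k (i, j)) j)
    \<le> (1 - inner (b i *\<^sub>R U i) (b j *\<^sub>R U j)) / (1 + \<delta>) ^ k"
  using assms(1)
proof (induction k arbitrary: U)
  case (Suc k)
  let ?V = "update f U (i, j)"
  have "1 - inner (b i *\<^sub>R foldl (update f) U (replicate (Suc k) (i, j)) i)
      (b j *\<^sub>R foldl (update f) U (replicate (Suc k) (i, j)) j)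
    \<le> (1 - inner (b i *\<^sub>R ?V i) (b j *\<^sub>R ?V j)) / (1 + \<delta>) ^ k"
    using Suc.IH[OF aligned_update[OF Suc.prems assms(2,3)]] by simp
  also have "\<dots> \<le> (1 - inner (b i *\<^sub>R U i) (b j *\<^sub>R U j)) / (1 + \<delta>) / (1 + \<delta>) ^ k"
    using pull_update[OF Suc.prems assms(2,3)] \<delta>_pos by (intro divide_right_mono) auto
  finally show ?case by (simp add: field_simps)
qed simp

lemma pull_towards_0:
  assumes al: "aligned n b U \<mu>" and "m0 \<le> \<mu>" "distinct xs" "set xs \<subseteq> {1..<n}"
  shows "\<forall>i\<in>set xs. 1 - inner (b i *\<^sub>R foldl (update f) U (concat (map (\<lambda>i. replicate r (i, 0)) xs)) i)
      (b 0 *\<^sub>R foldl (update f) U (concat (map (\<lambda>i. replicate r (i, 0)) xs)) 0) \<le> (1 - \<mu>) / (1 + \<delta>) ^ r"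
  using assms(1,3,4)
proof (induction xs arbitrary: U)
  case (Cons x xs)
  define V where "V = foldl (update f) U (replicate r (x, 0))"
  define rest where "rest = concat (map (\<lambda>i. replicate r (i, 0::nat)) xs)"
  have x: "(x, 0) \<in> Omega n" using Cons.prems(3) by (auto simp: Omega_def)
  have "set (replicate r (x, 0)) \<subseteq> Omega n" using x by (simp add: set_replicate_conv_if)
  hence "aligned n b V \<mu>" using aligned_foldl[OF Cons.prems(1) \<open>m0 \<le> \<mu>\<close>] by (simp add: V_def)
  hence IH: "\<forall>i\<in>set xs. 1 - inner (b i *\<^sub>R foldl (update f) V rest i) (b 0 *\<^sub>R foldl (update f) V rest 0)
      \<le> (1 - \<mu>) / (1 + \<delta>) ^ r"
    using Cons.IH Cons.prems(2,3) by (simp add: rest_def)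
  have "fst ` set rest \<subseteq> set xs" by (auto simp: rest_def)
  moreover have "x \<notin> set xs" "0 \<notin> set xs" using Cons.prems(2,3) by auto
  ultimately have unchanged: "foldl (update f) V rest x = V x" "foldl (update f) V rest 0 = V 0"
    by (blast intro: foldl_update_other)+
  have "\<mu> \<le> inner (b x *\<^sub>R U x) (b 0 *\<^sub>R U 0)"
    using Cons.prems(1,3) by (auto simp: aligned_def)
  hence "(1 - inner (b x *\<^sub>R U x) (b 0 *\<^sub>R U 0)) / (1 + \<delta>) ^ r \<le> (1 - \<mu>) / (1 + \<delta>) ^ r"
    using \<delta>_pos by (intro divide_right_mono) auto
  hence "1 - inner (b x *\<^sub>R V x) (b 0 *\<^sub>R V 0) \<le> (1 - \<mu>) / (1 + \<delta>) ^ r"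
    using pull_repeat[OF Cons.prems(1) \<open>m0 \<le> \<mu>\<close> x, of r] unfolding V_def by linarith
  thus ?case using IH unchanged by (simp add: V_def rest_def)
qed simp

lemma aligned_pull_block:
  assumes al: "aligned n b U \<mu>" and m: "m0 \<le> \<mu>" and "0 < n" and r: "8 \<le> (1 + \<delta>) ^ r"
  shows "aligned n b (foldl (update f) U (pull_block n r)) ((1 + \<mu>) / 2)"
proof -
  define W where "W = foldl (update f) U (pull_block n r)"
  have alW: "aligned n b W \<mu>" using aligned_foldl[OF al m set_pull_block] by (simp add: W_def)
  have \<mu>1: "\<mu> \<le> 1" using aligned_le_1[OF al \<open>0 < n\<close>] .
  have to_0: "1 - inner (b i *\<^sub>R W i) (b 0 *\<^sub>R W 0) \<le> (1 - \<mu>) / 8" if "i < n" for i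
  proof (cases "i = 0")
    case True
    thus ?thesis using inner_self_unit[OF aligned_unit[OF alW \<open>0 < n\<close>]] \<mu>1 by simp
  next
    case False
    hence "1 - inner (b i *\<^sub>R W i) (b 0 *\<^sub>R W 0) \<le> (1 - \<mu>) / (1 + \<delta>) ^ r"
      using pull_towards_0[OF al m, of "[1..<n]" r] that by (simp add: W_def pull_block_def)
    also have "\<dots> \<le> (1 - \<mu>) / 8" using \<mu>1 r by (intro divide_left_mono) auto
    finally show ?thesis .
  qed
  have "(1 + \<mu>) / 2 \<le> inner (b i *\<^sub>R W i) (b k *\<^sub>R W k)" if "i < n" "k < n" for i k
    using one_minus_inner_triangle[OF aligned_unit[OF alW that(1)] aligned_unit[OF alW \<open>0 < n\<close>]
        aligned_unit[OF alW that(2)]] to_0[OF that(1)] to_0[OF that(2)]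
    by (simp add: inner_commute)
  thus ?thesis using alW by (simp add: aligned_def W_def)
qed

lemma traj_aligned:
  assumes "sset \<omega> \<subseteq> Omega n" "aligned n b (traj f U0 \<omega> t) \<mu>" "m0 \<le> \<mu>" "t \<le> s"
  shows "aligned n b (traj f U0 \<omega> s) \<mu>"
proof -
  have "traj f U0 \<omega> s = foldl (update f) (traj f U0 \<omega> t) (stake (s - t) (sdrop t \<omega>))"
    using traj_add[of f U0 \<omega> t "s - t"] assms(4) by simp
  thus ?thesis using aligned_foldl[OF assms(2,3) order_trans[OF set_stake_sdrop_subset assms(1)]] by simp
qed

lemma traj_cap:
  assumes "sset \<omega> \<subseteq> Omega n" "aligned n b U0 m0" "0 \<le> \<nu>"
    and "\<forall>k<n. \<nu> \<le> inner (b k *\<^sub>R traj f U0 \<omega> t k) z" "t \<le> s"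
  shows "\<forall>k<n. \<nu> \<le> inner (b k *\<^sub>R traj f U0 \<omega> s k) z"
proof -
  have "aligned n b (traj f U0 \<omega> t) m0" using traj_aligned[of \<omega> U0 0 m0 t] assms(1,2) by simp
  from cap_foldl[OF this order_trans[OF set_stake_sdrop_subset assms(1)] assms(3,4), of "s - t"]
  show ?thesis using traj_add[of f U0 \<omega> t "s - t"] assms(5) by simp
qed

lemma traj_eventually_aligned:
  assumes al: "aligned n b U0 m0" and \<omega>: "sset \<omega> \<subseteq> Omega n" and "0 < n"
    and r: "8 \<le> (1 + \<delta>) ^ r"
    and recur: "alw (ev (\<lambda>\<omega>. stake (length (pull_block n r)) \<omega> = pull_block n r)) \<omega>"
    and "\<mu> < 1"
  shows "\<exists>t. aligned n b (traj f U0 \<omega> t) \<mu>"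
proof -
  have m01: "m0 \<le> 1" using aligned_le_1[OF al \<open>0 < n\<close>] .
  have halving: "\<exists>t. aligned n b (traj f U0 \<omega> t) (1 - (1 - m0) / 2 ^ N)" for N
  proof (induction N)
    case 0 show ?case using al by (auto intro!: exI[of _ 0])
  next
    case (Suc N)
    define \<mu>N where "\<mu>N = 1 - (1 - m0) / 2 ^ N"
    have "(1 - m0) / 2 ^ N \<le> 1 - m0"
      using m01 mult_left_mono[of 1 "2 ^ N" "1 - m0"] by (simp add: divide_le_eq)
    hence "m0 \<le> \<mu>N" by (simp add: \<mu>N_def)
    obtain t where t: "aligned n b (traj f U0 \<omega> t) \<mu>N" using Suc.IH by (auto simp: \<mu>N_def)
    obtain k where k: "stake (length (pull_block n r)) (sdrop (t + k) \<omega>) = pull_block n r"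
      using recur by (auto simp: alw_iff_sdrop ev_iff_sdrop)
    have "aligned n b (traj f U0 \<omega> (t + k)) \<mu>N"
      using traj_aligned[OF \<omega> t \<open>m0 \<le> \<mu>N\<close>, of "t + k"] by simp
    moreover have "traj f U0 \<omega> (t + k + length (pull_block n r)) =
        foldl (update f) (traj f U0 \<omega> (t + k)) (pull_block n r)"
      using traj_add[of f U0 \<omega> "t + k"] k by simp
    ultimately have "aligned n b (traj f U0 \<omega> (t + k + length (pull_block n r))) ((1 + \<mu>N) / 2)"
      using aligned_pull_block[OF _ \<open>m0 \<le> \<mu>N\<close> \<open>0 < n\<close> r] by simp
    moreover have "(1 + \<mu>N) / 2 = 1 - (1 - m0) / 2 ^ Suc N" by (simp add: \<mu>N_def field_simps)
    ultimately show ?case by auto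
  qed
  obtain N where "(1 / 2) ^ N < 1 - \<mu>" using real_arch_pow_inv[of "1 - \<mu>" "1 / 2"] \<open>\<mu> < 1\<close> by auto
  moreover have "(1 - m0) / 2 ^ N \<le> (1 / 2) ^ N" using m0_pos by (simp add: power_one_over divide_le_eq)
  ultimately have "\<mu> \<le> 1 - (1 - m0) / 2 ^ N" by linarith
  thus ?thesis using halving[of N] aligned_mono by blast
qed

lemma traj_oriented_settles:
  assumes al: "aligned n b U0 m0" and \<omega>: "sset \<omega> \<subseteq> Omega n"
    and eventually_aligned: "\<forall>\<mu><1. \<exists>t. aligned n b (traj f U0 \<omega> t) \<mu>"
  shows "\<forall>\<epsilon>>0. \<exists>t. \<forall>s\<ge>t. \<forall>i<n. \<forall>k<n.
    dist (b i *\<^sub>R traj f U0 \<omega> s i) (b k *\<^sub>R traj f U0 \<omega> t k) < \<epsilon>"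
proof (intro allI impI)
  fix \<epsilon> :: real assume "0 < \<epsilon>"
  define \<mu> where "\<mu> = max 0 (1 - (\<epsilon> / 2)\<^sup>2 / 2)"
  have "\<mu> < 1" using \<open>0 < \<epsilon>\<close> by (simp add: \<mu>_def)
  then obtain t where t: "aligned n b (traj f U0 \<omega> t) \<mu>" using eventually_aligned by blast
  have "dist (b i *\<^sub>R traj f U0 \<omega> s i) (b k *\<^sub>R traj f U0 \<omega> t k) < \<epsilon>"
    if "t \<le> s" "i < n" "k < n" for s i k
  proof -
    have "\<forall>l<n. \<mu> \<le> inner (b l *\<^sub>R traj f U0 \<omega> t l) (b k *\<^sub>R traj f U0 \<omega> t k)"
      using t \<open>k < n\<close> by (simp add: aligned_def)
    from traj_cap[OF \<omega> al _ this \<open>t \<le> s\<close>] have "\<mu> \<le> inner (b i *\<^sub>R traj f U0 \<omega> s i) (b k *\<^sub>R traj f U0 \<omega> t k)"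
      using \<open>i < n\<close> by (simp add: \<mu>_def)
    hence close: "1 - (\<epsilon> / 2)\<^sup>2 / 2 \<le> inner (b i *\<^sub>R traj f U0 \<omega> s i) (b k *\<^sub>R traj f U0 \<omega> t k)"
      by (simp add: \<mu>_def)
    have "aligned n b (traj f U0 \<omega> s) m0" using traj_aligned[OF \<omega> _ order_refl, of U0 0 s] al by simp
    from aligned_unit[OF this \<open>i < n\<close>] aligned_unit[OF t \<open>k < n\<close>] close \<open>0 < \<epsilon>\<close>
    have "norm (b i *\<^sub>R traj f U0 \<omega> s i - b k *\<^sub>R traj f U0 \<omega> t k) \<le> \<epsilon> / 2"
      by (intro norm_diff_le_of_inner_ge) simp_all
    thus ?thesis using \<open>0 < \<epsilon>\<close> by (simp add: dist_norm)
  qed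
  thus "\<exists>t. \<forall>s\<ge>t. \<forall>i<n. \<forall>k<n. dist (b i *\<^sub>R traj f U0 \<omega> s i) (b k *\<^sub>R traj f U0 \<omega> t k) < \<epsilon>"
    by blast
qed

lemma polarizes_if_pull_block_recurs:
  assumes "aligned n b U0 m0" "sset \<omega> \<subseteq> Omega n" "0 < n" "8 \<le> (1 + \<delta>) ^ r"
    and "alw (ev (\<lambda>\<omega>. stake (length (pull_block n r)) \<omega> = pull_block n r)) \<omega>"
  shows "polarizes n (traj f U0 \<omega>)"
  using polarizes_if_oriented_settles[OF _ traj_oriented_settles[OF assms(1,2)]]
    traj_eventually_aligned[OF assms] b_sign by blast

end

lemma space_stream_space_pmf [simp]: "space (stream_space (measure_pmf D)) = UNIV"
  by (simp add: space_stream_space)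

lemma prob_space_stream_space_pmf: "prob_space (stream_space (measure_pmf D))"
  by (rule prob_space.prob_space_stream_space[OF prob_space_measure_pmf])

lemma sets_stake_pmf:
  fixes D :: "'a::countable pmf"
  shows "{\<omega>. stake L \<omega> \<in> X} \<in> sets (stream_space (measure_pmf D))"
proof -
  have "stake L \<in> measurable (stream_space (measure_pmf D)) (count_space UNIV)" by measurable
  from measurable_sets[OF this, of X] show ?thesis by (simp add: vimage_def)
qed

lemma sets_sdrop_pmf:
  "B \<in> sets (stream_space (measure_pmf D)) \<Longrightarrow> {\<omega>. sdrop L \<omega> \<in> B} \<in> sets (stream_space (measure_pmf D))"
  using measurable_sets[OF measurable_sdrop[of L "measure_pmf D"]] by (simp add: vimage_def)

lemma emeasure_stake_sdrop:
  fixes D :: "'a::countable pmf"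
  defines "S \<equiv> stream_space (measure_pmf D)"
  assumes B: "B \<in> sets S"
  shows "emeasure S {\<omega>. stake L \<omega> \<in> X \<and> sdrop L \<omega> \<in> B} = emeasure S {\<omega>. stake L \<omega> \<in> X} * emeasure S B"
proof (induction L arbitrary: X)
  case 0
  interpret prob_space S unfolding S_def by (rule prob_space_stream_space_pmf)
  show ?case using emeasure_space_1 by (simp add: S_def)
next
  case (Suc L)
  have "{\<omega>. stake (Suc L) \<omega> \<in> X \<and> sdrop (Suc L) \<omega> \<in> B}
      = {\<omega>. stake (Suc L) \<omega> \<in> X} \<inter> {\<omega>. sdrop (Suc L) \<omega> \<in> B}" by blast
  hence sets: "{\<omega>. stake (Suc L) \<omega> \<in> X \<and> sdrop (Suc L) \<omega> \<in> B} \<in> sets S"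
    using sets_stake_pmf[of "Suc L" X D] sets_sdrop_pmf[OF B[unfolded S_def], of "Suc L"]
    unfolding S_def by (metis sets.Int)
  have "emeasure S {\<omega>. stake (Suc L) \<omega> \<in> X \<and> sdrop (Suc L) \<omega> \<in> B}
      = (\<integral>\<^sup>+t. emeasure S {\<omega>. stake L \<omega> \<in> {xs. t # xs \<in> X} \<and> sdrop L \<omega> \<in> B} \<partial>measure_pmf D)"
    using prob_space.emeasure_stream_space[OF prob_space_measure_pmf sets[unfolded S_def]]
    by (simp add: S_def)
  also have "\<dots> = (\<integral>\<^sup>+t. emeasure S {\<omega>. stake L \<omega> \<in> {xs. t # xs \<in> X}} * emeasure S B \<partial>measure_pmf D)"
    by (simp only: Suc.IH)
  also have "\<dots> = (\<integral>\<^sup>+t. emeasure S {\<omega>. stake L \<omega> \<in> {xs. t # xs \<in> X}} \<partial>measure_pmf D) * emeasure S B"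
    by (rule nn_integral_multc) simp
  also have "(\<integral>\<^sup>+t. emeasure S {\<omega>. stake L \<omega> \<in> {xs. t # xs \<in> X}} \<partial>measure_pmf D)
      = emeasure S {\<omega>. stake (Suc L) \<omega> \<in> X}"
    using prob_space.emeasure_stream_space[OF prob_space_measure_pmf sets_stake_pmf[of "Suc L" X D]]
    by (simp add: S_def)
  finally show ?case .
qed

lemma emeasure_stake_eq_pos:
  fixes D :: "'a::countable pmf"
  assumes "set w \<subseteq> set_pmf D"
  shows "0 < emeasure (stream_space (measure_pmf D)) {\<omega>. stake (length w) \<omega> = w}"
  using assms
proof (induction w)
  case Nil
  interpret prob_space "stream_space (measure_pmf D)" by (rule prob_space_stream_space_pmf)
  show ?case using emeasure_space_1 by simp
next
  case (Cons x w)
  let ?S = "stream_space (measure_pmf D)"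
  have "emeasure ?S {\<omega>. stake (length (x # w)) \<omega> = x # w}
      = (\<integral>\<^sup>+t. emeasure ?S {\<omega>. t ## \<omega> \<in> {\<omega>. stake (length (x # w)) \<omega> = x # w}} \<partial>measure_pmf D)"
    using prob_space.emeasure_stream_space[OF prob_space_measure_pmf sets_stake_pmf[of "length (x # w)" "{x # w}" D]]
    by simp
  also have "\<dots> = (\<integral>\<^sup>+t. emeasure ?S {\<omega>. stake (length w) \<omega> = w} * indicator {x} t \<partial>measure_pmf D)"
    by (intro nn_integral_cong) (auto split: split_indicator)
  also have "\<dots> = emeasure ?S {\<omega>. stake (length w) \<omega> = w} * emeasure (measure_pmf D) {x}"
    by simp
  finally show ?case
    using Cons by (simp add: emeasure_pmf_single pmf_positive ennreal_zero_less_mult_iff)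
qed

lemma sets_stake_never_at_multiples:
  fixes D :: "'a::countable pmf"
  shows "{\<omega>. \<forall>j. stake L (sdrop (j * L) \<omega>) \<noteq> w} \<in> sets (stream_space (measure_pmf D))"
proof -
  define C where "C = {\<omega>. stake L \<omega> \<in> - {w}}"
  have "{\<omega>. sdrop (j * L) \<omega> \<in> C} \<in> sets (stream_space (measure_pmf D))" for j
    unfolding C_def by (rule sets_sdrop_pmf[OF sets_stake_pmf])
  moreover have "{\<omega>. \<forall>j. stake L (sdrop (j * L) \<omega>) \<noteq> w} = (\<Inter>j. {\<omega>. sdrop (j * L) \<omega> \<in> C})"
    by (auto simp: C_def)
  ultimately show ?thesis by auto
qed

lemma emeasure_stake_never_at_multiples:
  fixes D :: "'a::countable pmf" and w :: "'a list"
  defines "S \<equiv> stream_space (measure_pmf D)" and "L \<equiv> length w"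
  assumes w: "set w \<subseteq> set_pmf D"
  shows "emeasure S {\<omega>. \<forall>j. stake L (sdrop (j * L) \<omega>) \<noteq> w} = 0"
proof -
  interpret prob_space S unfolding S_def by (rule prob_space_stream_space_pmf)
  define A where "A = {\<omega>. \<forall>j. stake L (sdrop (j * L) \<omega>) \<noteq> w}"
  have A_sets: "A \<in> sets S" unfolding A_def S_def by (rule sets_stake_never_at_multiples)
  have all_nat: "(\<forall>j. P j) \<longleftrightarrow> P 0 \<and> (\<forall>j. P (Suc j))" for P :: "nat \<Rightarrow> bool"
    by (metis not0_implies_Suc)
  have "sdrop (Suc j * L) \<omega> = sdrop (j * L) (sdrop L \<omega>)" for j \<omega>
    by (simp add: sdrop_add add.commute)
  (* The first block is independent of the shifted stream, so prob A = (1 - p) prob A with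
     p = prob {first block = w} > 0. *)
  hence "A = {\<omega>. stake L \<omega> \<in> - {w} \<and> sdrop L \<omega> \<in> A}"
    unfolding A_def by (subst all_nat) simp
  hence "emeasure S A = emeasure S {\<omega>. stake L \<omega> \<in> - {w} \<and> sdrop L \<omega> \<in> A}"
    by (rule arg_cong)
  also have "\<dots> = emeasure S {\<omega>. stake L \<omega> \<in> - {w}} * emeasure S A"
    unfolding S_def by (rule emeasure_stake_sdrop[OF A_sets[unfolded S_def]])
  finally have "prob A = prob {\<omega>. stake L \<omega> \<in> - {w}} * prob A"
    by (simp add: emeasure_eq_measure ennreal_mult''[symmetric])
  moreover have "prob {\<omega>. stake L \<omega> \<in> - {w}} = 1 - prob {\<omega>. stake L \<omega> = w}"
  proof -
    have "{\<omega>. stake L \<omega> \<in> - {w}} = space S - {\<omega>. stake L \<omega> = w}" by (auto simp: S_def)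
    thus ?thesis using prob_compl sets_stake_pmf[of L "{w}" D] by (simp add: S_def)
  qed
  moreover have "0 < prob {\<omega>. stake L \<omega> = w}"
    using emeasure_stake_eq_pos[OF w, folded S_def L_def] by (simp add: emeasure_eq_measure)
  ultimately have "prob A = 0" by (simp add: algebra_simps)
  thus ?thesis by (simp add: A_def emeasure_eq_measure)
qed

lemma AE_stake_infinitely_often:
  fixes D :: "'a::countable pmf"
  assumes w: "set w \<subseteq> set_pmf D"
  shows "AE \<omega> in stream_space (measure_pmf D). alw (ev (\<lambda>\<omega>. stake (length w) \<omega> = w)) \<omega>"
proof (cases "w = []")
  case False
  let ?S = "stream_space (measure_pmf D)"
  define L where "L = length w"
  define A where "A = {\<omega>. \<forall>j. stake L (sdrop (j * L) \<omega>) \<noteq> w}"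
  have A_sets: "A \<in> sets ?S" unfolding A_def by (rule sets_stake_never_at_multiples)
  have "emeasure ?S {\<omega>. sdrop (k * L) \<omega> \<in> A} = 0" for k
    using emeasure_stake_sdrop[OF A_sets, of "k * L" UNIV] emeasure_stake_never_at_multiples[OF w]
    by (simp add: A_def L_def)
  hence "{\<omega>. sdrop (k * L) \<omega> \<in> A} \<in> null_sets ?S" for k
    using sets_sdrop_pmf[OF A_sets] by blast
  hence AE: "AE \<omega> in ?S. \<forall>k. sdrop (k * L) \<omega> \<notin> A"
    by (intro AE_I'[of "\<Union>k. {\<omega>. sdrop (k * L) \<omega> \<in> A}"]) auto
  have "1 \<le> L" using False by (simp add: L_def Suc_le_eq)
  have "alw (ev (\<lambda>\<omega>. stake L \<omega> = w)) \<omega>" if not_A: "\<forall>k. sdrop (k * L) \<omega> \<notin> A" for \<omega>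
    unfolding alw_iff_sdrop ev_iff_sdrop
  proof
    fix m
    obtain j where "stake L (sdrop (j * L) (sdrop (m * L) \<omega>)) = w"
      using not_A[rule_format, of m] unfolding A_def by blast
    hence "stake L (sdrop ((m + j) * L) \<omega>) = w" by (simp add: add_mult_distrib)
    moreover have "m \<le> (m + j) * L"
      using \<open>1 \<le> L\<close> by (metis le_add1 mult.right_neutral mult_le_mono2 order_trans)
    ultimately show "\<exists>k. stake L (sdrop k (sdrop m \<omega>)) = w"
      by (metis le_add_diff_inverse sdrop_add)
  qed
  thus ?thesis unfolding L_def[symmetric] by (rule eventually_mono[OF AE])
qed (simp add: alw_iff_sdrop ev_iff_sdrop)

lemma AE_sset_subset_set_pmf: "AE \<omega> in stream_space (measure_pmf D). sset \<omega> \<subseteq> set_pmf D"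
proof -
  have "AE \<omega> in stream_space (measure_pmf D). stream_all (\<lambda>x. x \<in> set_pmf D) \<omega>"
    by (rule prob_space.AE_stream_all[OF prob_space_measure_pmf]) (auto simp: AE_measure_pmf)
  thus ?thesis by (rule eventually_mono) auto
qed

lemma strictly_convex_aligned:
  assumes "unit_config n U0" "strictly_convex n U0"
  obtains b m0 where "\<forall>i. b i \<in> {-1, 1}" "0 < m0" "aligned n b U0 m0"
proof -
  obtain b0 where b0: "\<forall>i<n. b0 i \<in> {-1, 1}" "\<forall>i<n. \<forall>j<n. 0 < inner (b0 i *\<^sub>R U0 i) (b0 j *\<^sub>R U0 j)"
    using assms(2) by (auto simp: strictly_convex_def)
  define b where "b i = (if i < n then b0 i else 1)" for i
  define Q where "Q = (\<lambda>(i, j). inner (b i *\<^sub>R U0 i) (b j *\<^sub>R U0 j)) ` ({..<n} \<times> {..<n})"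
  define m0 where "m0 = Min (insert 1 Q)"
  have "finite Q" by (simp add: Q_def)
  have "0 < m0" using b0(2) \<open>finite Q\<close> by (auto simp: m0_def Q_def b_def)
  moreover have "m0 \<le> inner (b i *\<^sub>R U0 i) (b j *\<^sub>R U0 j)" if "i < n" "j < n" for i j
    using \<open>finite Q\<close> that unfolding m0_def Q_def by (intro Min_le) auto
  ultimately show ?thesis
    using that[of b m0] b0(1) assms(1) by (auto simp: b_def aligned_def unit_config_def)
qed

lemma stable_bounded_away_from_0:
  assumes "stable f" "0 < m"
  shows "\<exists>\<delta>>0. \<forall>A\<in>{-1..1}. m \<le> \<bar>A\<bar> \<longrightarrow> \<delta> \<le> \<bar>f A\<bar>"
proof -
  define K where "K = {-1..-m} \<union> {m..(1::real)}"
  have K: "A \<in> K \<longleftrightarrow> A \<in> {-1..1} \<and> m \<le> \<bar>A\<bar>" for A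
    using assms(2) by (auto simp: K_def abs_if)
  show ?thesis
  proof (cases "K = {}")
    case True
    thus ?thesis using K by (intro exI[of _ 1]) auto
  next
    case False
    have "continuous_on K (\<lambda>A. \<bar>f A\<bar>)"
      using assms(1) K by (auto simp: stable_def intro!: continuous_intros elim: continuous_on_subset)
    moreover have "compact K" by (simp add: K_def compact_Un)
    ultimately obtain A0 where "A0 \<in> K" and A0: "\<forall>A\<in>K. \<bar>f A0\<bar> \<le> \<bar>f A\<bar>"
      using continuous_attains_inf[of K "\<lambda>A. \<bar>f A\<bar>"] False by blast
    have "sgn (f A0) = sgn A0" "A0 \<noteq> 0" using assms \<open>A0 \<in> K\<close> K by (auto simp: stable_def)
    hence "0 < \<bar>f A0\<bar>" by (auto simp: sgn_0_0)
    thus ?thesis using A0 K by (intro exI[of _ "\<bar>f A0\<bar>"]) auto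
  qed
qed

theorem mainTheorem6:
  fixes f :: "real \<Rightarrow> real" and D :: "(nat \<times> nat) pmf" and n :: nat
    and U0 :: "nat \<Rightarrow> real ^ 'd"
  assumes "CARD('d) \<ge> 2" and "n \<ge> 2"
    and "stable f"
    and "set_pmf D = Omega n"
    and "unit_config n U0"
    and "strictly_convex n U0"
  shows "AE \<omega> in stream_space (measure_pmf D). polarizes n (traj f U0 \<omega>)"
proof -
  obtain b m0 where b: "\<forall>i. b i \<in> {-1, 1}" and "0 < m0" and al: "aligned n b U0 m0"
    using strictly_convex_aligned[OF assms(5,6)] .
  obtain \<delta> where "0 < \<delta>" and f_bound: "\<forall>A\<in>{-1..1}. m0 \<le> \<bar>A\<bar> \<longrightarrow> \<delta> \<le> \<bar>f A\<bar>"
    using stable_bounded_away_from_0[OF assms(3) \<open>0 < m0\<close>] by blast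
  interpret oriented_dynamics f n b m0 \<delta>
    using b \<open>0 < m0\<close> \<open>0 < \<delta>\<close> f_bound assms(3) by unfold_locales (auto simp: stable_def)
  obtain r where r: "8 \<le> (1 + \<delta>) ^ r"
    using real_arch_pow[of "1 + \<delta>" 8] \<open>0 < \<delta>\<close> by (auto intro: less_imp_le)
  have "AE \<omega> in stream_space (measure_pmf D).
      alw (ev (\<lambda>\<omega>. stake (length (pull_block n r)) \<omega> = pull_block n r)) \<omega>"
    using set_pull_block assms(4) by (intro AE_stake_infinitely_often) simp
  moreover have "AE \<omega> in stream_space (measure_pmf D). sset \<omega> \<subseteq> set_pmf D"
    by (rule AE_sset_subset_set_pmf)
  ultimately show ?thesis
  proof eventually_elim
    case (elim \<omega>)
    thus ?case using polarizes_if_pull_block_recurs[OF al _ _ r] assms(2,4) by simp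
  qed
qed

end
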